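(* Let $M$ be a positive integer and let $S\subset\mathbb{R}^4$ be a finite set with $|S|\ge M+1$. For each $\lambda\in S$, let $B_\lambda$ be the smallest closed ball centered at $\lambda$ containing at least $M+1$ points of $S$ (counting $\lambda$ itself), and let $R_\lambda$ be its radius. For $\lambda\in S$ let \[ L_\lambda=\{\lambda'\in S: R_{\lambda'}\ge R_\lambda \text{ and } B_\lambda\cap B_{\lambda'}\neq\emptyset\}. \] Then $|L_\lambda|\ll M$ for every $\lambda\in S$, with an absolute implied constant.
   Context: Balls and distances are Euclidean in $\mathbb{R}^4$. *)

theory Defs
  imports "HOL-Analysis.Analysis"
begin

definition kradius :: "(real^4) set \<Rightarrow> nat \<Rightarrow> real^4 \<Rightarrow> real" where
  "kradius S M x = (LEAST r. 0 \<le> r \<and> M + 1 \<le> card (S \<inter> cball x r))"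

definition Lset :: "(real^4) set \<Rightarrow> nat \<Rightarrow> real^4 \<Rightarrow> (real^4) set" where
  "Lset S M x = {y \<in> S. kradius S M x \<le> kradius S M y \<and>
      cball x (kradius S M x) \<inter> cball y (kradius S M y) \<noteq> {}}"

end

theory Submission
  imports Defs
begin

text \<open>Write R = R_x. Every y in L satisfies R <= R_y and |y - x| <= R + R_y. Sort the points of L
  into boundedly many classes: a point with |y - x| < 2R by the grid cell of (y - x)/R, any other
  point by the grid cell of its direction (y - x)/|y - x|, the cells having diameter less than 1/2.
  In each class let y0 be the point farthest from x. Every y of the class lies in the open ball of
  radius R_y0 about y0: for near points |y - y0| < R/2, and for far points
  |y - y0| < |y0 - x| - |y - x|/2 <= (R + R_y0) - R. By the minimality of R_y0 that open ball
  contains at most M points of S, so |L| is at most M times the number of classes.\<close>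

lemma card_le_mult_if_fibres_le:
  assumes "finite K" "f ` A \<subseteq> K" "\<And>k. card {a \<in> A. f a = k} \<le> m"
  shows "card A \<le> card K * m"
proof (cases "finite A")
  case True
  have "A = (\<Union>k\<in>K. {a \<in> A. f a = k})" using assms(2) by blast
  then have "card A \<le> (\<Sum>k\<in>K. card {a \<in> A. f a = k})"
    using card_UN_le[OF assms(1)] by metis
  also have "\<dots> \<le> card K * m" using sum_mono[of K _ "\<lambda>_. m"] assms(3) by simp
  finally show ?thesis .
qed simp

lemma finite_cball_radius_attained:
  fixes x :: "'a::metric_space"
  assumes "finite S" "S \<inter> cball x r \<noteq> {}"
  obtains d where "d \<in> dist x ` S" "d \<le> r" "S \<inter> cball x d = S \<inter> cball x r"
proof
  let ?d = "Max (dist x ` (S \<inter> cball x r))"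
  have "?d \<in> dist x ` (S \<inter> cball x r)" using assms by (intro Max_in) auto
  then show "?d \<in> dist x ` S" "?d \<le> r" by auto
  have "dist x z \<le> ?d" if "z \<in> S \<inter> cball x r" for z
    using assms(1) that by (intro Max_ge) auto
  with \<open>?d \<le> r\<close> show "S \<inter> cball x ?d = S \<inter> cball x r" by auto
qed

lemma finite_ball_in_smaller_cball:
  fixes x :: "'a::metric_space"
  assumes "finite S" "S \<inter> ball x r \<noteq> {}"
  obtains d where "0 \<le> d" "d < r" "S \<inter> ball x r \<subseteq> cball x d"
proof
  let ?d = "Max (dist x ` (S \<inter> ball x r))"
  have "?d \<in> dist x ` (S \<inter> ball x r)" using assms by (intro Max_in) auto
  then show "0 \<le> ?d" "?d < r" by auto
  show "S \<inter> ball x r \<subseteq> cball x ?d"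
    using assms(1) by (auto intro!: Max_ge)
qed

lemma norm_diff_lt_if_sgn_close:
  fixes a b :: "'a::real_normed_vector"
  assumes "a \<noteq> 0" "norm a \<le> norm b" "norm (sgn a - sgn b) < e"
  shows "norm (a - b) < norm b - norm a + e * norm a"
proof -
  have "b \<noteq> 0" using assms(1,2) by auto
  have "a - b = norm a *\<^sub>R (sgn a - sgn b) + (norm a - norm b) *\<^sub>R sgn b"
    using assms(1) \<open>b \<noteq> 0\<close> by (simp add: sgn_div_norm algebra_simps)
  then have "norm (a - b) \<le> norm a * norm (sgn a - sgn b) + (norm b - norm a)"
    using norm_triangle_ineq[of "norm a *\<^sub>R (sgn a - sgn b)" "(norm a - norm b) *\<^sub>R sgn b"]
      assms(2) \<open>b \<noteq> 0\<close> by (simp add: norm_sgn)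
  also have "\<dots> < norm b - norm a + e * norm a"
    using assms(1,3) by (simp add: mult.commute)
  finally show ?thesis .
qed

definition grid_cell :: "real \<Rightarrow> real^'n \<Rightarrow> ('n \<Rightarrow> int)" where
  "grid_cell h w = (\<lambda>i. \<lfloor>w $ i / h\<rfloor>)"

lemma dist_lt_if_grid_cell_eq:
  fixes v w :: "real^'n" and h :: real
  assumes "0 < h" "grid_cell h v = grid_cell h w"
  shows "dist v w < CARD('n) * h"
proof -
  have "\<bar>(v - w) $ i\<bar> < h" for i
  proof -
    have "\<lfloor>v $ i / h\<rfloor> = \<lfloor>w $ i / h\<rfloor>"
      using fun_cong[OF assms(2), of i] by (simp add: grid_cell_def)
    then have "\<bar>v $ i / h - w $ i / h\<bar> < 1"
      using floor_correct[of "v $ i / h"] floor_correct[of "w $ i / h"] by linarith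
    then have "\<bar>(v $ i - w $ i) / h\<bar> < 1" by (simp only: diff_divide_distrib)
    then show ?thesis using assms(1) by (simp add: abs_divide pos_divide_less_eq)
  qed
  then have "(\<Sum>i\<in>UNIV. \<bar>(v - w) $ i\<bar>) < (\<Sum>i\<in>(UNIV::'n set). h)"
    by (intro sum_strict_mono) auto
  then show ?thesis
    using norm_le_l1_cart[of "v - w"] by (simp add: dist_norm)
qed

lemma finite_grid_cell_image_ball:
  assumes "0 < h"
  shows "finite (grid_cell h ` (ball 0 \<rho> :: (real^'n) set))"
proof (rule finite_subset)
  show "grid_cell h ` (ball 0 \<rho> :: (real^'n) set) \<subseteq> Pi\<^sub>E UNIV (\<lambda>_. {\<lfloor>- \<rho> / h\<rfloor>..\<lfloor>\<rho> / h\<rfloor>})"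
  proof (intro image_subsetI PiE_I)
    fix w :: "real^'n" and i
    assume "w \<in> ball 0 \<rho>"
    then have "\<bar>w $ i\<bar> \<le> \<rho>" using component_le_norm_cart[of w i] by simp
    then have "- \<rho> / h \<le> w $ i / h \<and> w $ i / h \<le> \<rho> / h"
      using assms by (intro conjI divide_right_mono) auto
    then show "grid_cell h w i \<in> {\<lfloor>- \<rho> / h\<rfloor>..\<lfloor>\<rho> / h\<rfloor>}"
      unfolding grid_cell_def by (auto intro: floor_mono)
  qed simp
qed (simp add: finite_PiE)

lemma
  assumes "finite S" "M + 1 \<le> card S"
  shows kradius_nonneg: "0 \<le> kradius S M x"
    and card_cball_kradius: "M + 1 \<le> card (S \<inter> cball x (kradius S M x))"
    and kradius_le: "\<And>r. 0 \<le> r \<Longrightarrow> M + 1 \<le> card (S \<inter> cball x r) \<Longrightarrow> kradius S M x \<le> r"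
proof -
  define D where "D = {d \<in> dist x ` S. M + 1 \<le> card (S \<inter> cball x d)}"
  have "finite D" using assms(1) by (simp add: D_def)
  have "S \<noteq> {}" using assms(2) by auto
  then have "Max (dist x ` S) \<in> dist x ` S" using assms(1) by (intro Max_in) auto
  moreover have "S \<inter> cball x (Max (dist x ` S)) = S"
    using assms(1) by (auto intro!: Max_ge)
  ultimately have "Max (dist x ` S) \<in> D" using assms(2) by (simp add: D_def)
  then have "Min D \<in> D" using \<open>finite D\<close> by (intro Min_in) auto
  then have Min_D: "0 \<le> Min D \<and> M + 1 \<le> card (S \<inter> cball x (Min D))" by (auto simp: D_def)
  have Min_D_le: "Min D \<le> r" if "0 \<le> r" "M + 1 \<le> card (S \<inter> cball x r)" for r
  proof -
    have "S \<inter> cball x r \<noteq> {}" using that(2) by auto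
    with assms(1) obtain d where "d \<in> dist x ` S" "d \<le> r" "S \<inter> cball x d = S \<inter> cball x r"
      by (rule finite_cball_radius_attained)
    with that(2) have "d \<in> D" by (simp add: D_def)
    with \<open>finite D\<close> \<open>d \<le> r\<close> show ?thesis by (meson Min_le order.trans)
  qed
  have "kradius S M x = Min D"
    unfolding kradius_def using Min_D Min_D_le by (intro Least_equality) auto
  with Min_D Min_D_le show "0 \<le> kradius S M x" "M + 1 \<le> card (S \<inter> cball x (kradius S M x))"
    "\<And>r. 0 \<le> r \<Longrightarrow> M + 1 \<le> card (S \<inter> cball x r) \<Longrightarrow> kradius S M x \<le> r"
    by auto
qed

lemma card_ball_kradius_le:
  assumes "finite S" "M + 1 \<le> card S"
  shows "card (S \<inter> ball x (kradius S M x)) \<le> M"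
proof (rule ccontr)
  assume "\<not> ?thesis"
  then have big: "M + 1 \<le> card (S \<inter> ball x (kradius S M x))" by simp
  then have "S \<inter> ball x (kradius S M x) \<noteq> {}" by auto
  with assms(1) obtain d where "0 \<le> d" "d < kradius S M x"
    and sub: "S \<inter> ball x (kradius S M x) \<subseteq> cball x d"
    by (rule finite_ball_in_smaller_cball)
  have "card (S \<inter> ball x (kradius S M x)) \<le> card (S \<inter> cball x d)"
    using sub assms(1) by (intro card_mono) auto
  with big have "kradius S M x \<le> d" using assms \<open>0 \<le> d\<close> by (intro kradius_le) auto
  with \<open>d < kradius S M x\<close> show False by simp
qed

lemma kradius_pos:
  assumes "finite S" "M + 1 \<le> card S" "1 \<le> M"
  shows "0 < kradius S M x"
proof (rule ccontr)
  assume "\<not> ?thesis"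
  with kradius_nonneg[OF assms(1,2), of x] have "kradius S M x = 0" by simp
  then have "card (S \<inter> cball x (kradius S M x)) \<le> 1"
    by (simp add: card_le_Suc0_iff_eq)
  with card_cball_kradius[OF assms(1,2), of x] assms(3) show False by simp
qed

lemma Lset_dist_le:
  assumes "y \<in> Lset S M x"
  shows "kradius S M x \<le> kradius S M y" "dist x y \<le> kradius S M x + kradius S M y"
proof -
  from assms obtain z where "z \<in> cball x (kradius S M x)" "z \<in> cball y (kradius S M y)"
    and "kradius S M x \<le> kradius S M y"
    unfolding Lset_def by auto
  then show "kradius S M x \<le> kradius S M y" "dist x y \<le> kradius S M x + kradius S M y"
    using dist_triangle3[of x y z] by (auto simp: dist_commute)
qed

definition cone_label :: "real \<Rightarrow> real^'n \<Rightarrow> bool \<times> ('n \<Rightarrow> int)" where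
  "cone_label R a =
     (if norm a < 2 * R then (True, grid_cell (1 / (2 * CARD('n))) (a /\<^sub>R R))
      else (False, grid_cell (1 / (2 * CARD('n))) (sgn a)))"

definition cone_label_range :: "(bool \<times> ('n::finite \<Rightarrow> int)) set" where
  "cone_label_range = UNIV \<times> grid_cell (1 / (2 * CARD('n))) ` (ball 0 2 :: (real^'n) set)"

lemma finite_cone_label_range: "finite cone_label_range"
  unfolding cone_label_range_def by (simp add: finite_grid_cell_image_ball)

lemma cone_label_in_range:
  assumes "0 < R"
  shows "cone_label R a \<in> cone_label_range"
proof (cases "norm a < 2 * R")
  case True
  with assms have "a /\<^sub>R R \<in> ball 0 2" by (simp add: inverse_eq_divide pos_divide_less_eq)
  with True show ?thesis unfolding cone_label_def cone_label_range_def by auto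
next
  case False
  have "sgn a \<in> ball 0 2" by (simp add: norm_sgn)
  with False show ?thesis unfolding cone_label_def cone_label_range_def by auto
qed

lemma dist_lt_if_grid_cell_half_eq:
  fixes v w :: "real^'n"
  assumes "grid_cell (1 / (2 * CARD('n))) v = grid_cell (1 / (2 * CARD('n))) w"
  shows "dist v w < 1 / 2"
  using dist_lt_if_grid_cell_eq[OF _ assms] by simp

lemma norm_diff_lt_if_cone_label_eq:
  fixes a b :: "real^'n"
  assumes "0 < R" "R \<le> r" "cone_label R a = cone_label R b"
    and "norm a \<le> norm b" "norm b \<le> R + r"
  shows "norm (a - b) < r"
proof (cases "norm a < 2 * R")
  case True
  with assms(3) have "norm b < 2 * R"
    "grid_cell (1 / (2 * CARD('n))) (a /\<^sub>R R) = grid_cell (1 / (2 * CARD('n))) (b /\<^sub>R R)"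
    unfolding cone_label_def by (auto split: if_splits)
  then have "norm (a /\<^sub>R R - b /\<^sub>R R) < 1 / 2"
    using dist_lt_if_grid_cell_half_eq by (simp add: dist_norm)
  then have "norm (a - b) < R / 2"
    using assms(1) by (simp add: scaleR_diff_right[symmetric] inverse_eq_divide pos_divide_less_eq)
  with assms(1,2) show ?thesis by simp
next
  case False
  with assms(3) have "\<not> norm b < 2 * R"
    "grid_cell (1 / (2 * CARD('n))) (sgn a) = grid_cell (1 / (2 * CARD('n))) (sgn b)"
    unfolding cone_label_def by (auto split: if_splits)
  then have "norm (sgn a - sgn b) < 1 / 2"
    using dist_lt_if_grid_cell_half_eq by (simp add: dist_norm)
  moreover have "a \<noteq> 0" using False assms(1) by auto
  ultimately have "norm (a - b) < norm b - norm a + 1 / 2 * norm a"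
    using norm_diff_lt_if_sgn_close[OF _ assms(4)] by blast
  with False assms(5) show ?thesis by simp
qed

lemma card_Lset_cone_fibre_le:
  assumes "finite S" "M + 1 \<le> card S" "1 \<le> M"
  shows "card {y \<in> Lset S M x. cone_label (kradius S M x) (y - x) = l} \<le> M"
proof -
  define F where "F = {y \<in> Lset S M x. cone_label (kradius S M x) (y - x) = l}"
  have "F \<subseteq> S" unfolding F_def Lset_def by auto
  have "card F \<le> M"
  proof (cases "F = {}")
    case False
    have "finite F" using \<open>F \<subseteq> S\<close> assms(1) by (rule finite_subset)
    define z where "z = Max ((\<lambda>y. norm (y - x)) ` F)"
    have "z \<in> (\<lambda>y. norm (y - x)) ` F" unfolding z_def using \<open>finite F\<close> False by (intro Max_in) auto
    then obtain ys where "ys \<in> F" "norm (ys - x) = z" by auto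
    have ys_farthest: "norm (y - x) \<le> norm (ys - x)" if "y \<in> F" for y
      unfolding \<open>norm (ys - x) = z\<close> z_def using \<open>finite F\<close> that by (intro Max_ge) auto
    have "F \<subseteq> S \<inter> ball ys (kradius S M ys)"
    proof
      fix y assume "y \<in> F"
      have "norm ((y - x) - (ys - x)) < kradius S M ys"
      proof (rule norm_diff_lt_if_cone_label_eq)
        show "0 < kradius S M x" using assms by (rule kradius_pos)
        show "kradius S M x \<le> kradius S M ys" "norm (ys - x) \<le> kradius S M x + kradius S M ys"
          using Lset_dist_le[of ys S M x] \<open>ys \<in> F\<close> by (auto simp: F_def dist_norm norm_minus_commute)
        show "cone_label (kradius S M x) (y - x) = cone_label (kradius S M x) (ys - x)"
          using \<open>y \<in> F\<close> \<open>ys \<in> F\<close> by (simp add: F_def)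
      qed (rule ys_farthest[OF \<open>y \<in> F\<close>])
      with \<open>y \<in> F\<close> \<open>F \<subseteq> S\<close> show "y \<in> S \<inter> ball ys (kradius S M ys)"
        by (auto simp: dist_norm norm_minus_commute)
    qed
    then have "card F \<le> card (S \<inter> ball ys (kradius S M ys))"
      using assms(1) by (intro card_mono) auto
    also have "\<dots> \<le> M" using assms(1,2) by (rule card_ball_kradius_le)
    finally show ?thesis .
  qed simp
  then show ?thesis by (simp add: F_def)
qed

theorem lemma4p5:
  shows "\<exists>C::real. \<forall>(M::nat) (S::(real^4) set) x.
           1 \<le> M \<longrightarrow> finite S \<longrightarrow> M + 1 \<le> card S \<longrightarrow> x \<in> S \<longrightarrow>
           real (card (Lset S M x)) \<le> C * real M"
proof -
  let ?K = "cone_label_range :: (bool \<times> (4 \<Rightarrow> int)) set"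
  have "real (card (Lset S M x)) \<le> real (card ?K) * real M"
    if "1 \<le> M" "finite S" "M + 1 \<le> card S" for M and S :: "(real^4) set" and x
  proof -
    have "card (Lset S M x) \<le> card ?K * M"
    proof (rule card_le_mult_if_fibres_le)
      show "finite ?K" by (rule finite_cone_label_range)
      show "(\<lambda>y. cone_label (kradius S M x) (y - x)) ` Lset S M x \<subseteq> ?K"
        by (intro image_subsetI cone_label_in_range kradius_pos[OF that(2,3,1)])
    qed (rule card_Lset_cone_fibre_le[OF that(2,3,1)])
    then show ?thesis by (metis of_nat_le_iff of_nat_mult)
  qed
  then show ?thesis by blast
qed

end
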